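(* Let $\Omega$ be a region of $\mathbb{C}$ and let $F:\Omega\to\mathbb{M}_n$ be a nonconstant analytic function. If every function $z\mapsto s_k(F(z))$, $1\leq k\leq n$, attains its minimum value over $\Omega$ at the same point $z_0\in\Omega$, then $\det(F(z_0))=0$.
   Context: A region is a nonempty open connected subset of $\mathbb{C}$. $\mathbb{M}_n$ is the set of $n\times n$ complex matrices; $F$ is analytic if each entry is analytic. For $A\in\mathbb{M}_n$, the singular values $s_1(A)\geq\cdots\geq s_n(A)$ are the nonnegative square roots of the eigenvalues of $A^*A$ in nonincreasing order. *)

theory Defs
  imports "HOL-Analysis.Analysis" "Jordan_Normal_Form.Char_Poly"
    "HOL-Computational_Algebra.Polynomial"
begin

definition conj_transpose :: "complex mat \<Rightarrow> complex mat" where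
  "conj_transpose A = mat (dim_col A) (dim_row A) (\<lambda>(i,j). cnj (A $$ (j,i)))"

(* singular values s_1(A) \<ge> ... \<ge> s_n(A): nonnegative square roots of the eigenvalues
   (with algebraic multiplicity, i.e. roots of the characteristic polynomial) of A^* A,
   listed in nonincreasing order *)
definition singular_values :: "complex mat \<Rightarrow> real list" where
  "singular_values A =
     rev (sorted_list_of_multiset
       (image_mset (\<lambda>c. sqrt (Re c)) (proots (char_poly (conj_transpose A * A)))))"

(* s_k(A), 1-based index k *)
definition sing_val :: "nat \<Rightarrow> complex mat \<Rightarrow> real" where
  "sing_val k A = singular_values A ! (k - 1)"

end

(*
  Suppose det F(z0) \<noteq> 0. Since |det A| is the product of the singular values of A, the
  hypothesis makes |det F| attain a nonzero minimum at z0, so det F is constant by the minimum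
  modulus principle. Then s_k(F z0) \<le> s_k(F z) for all k together with equal, nonzero products
  forces s_k(F z) = s_k(F z0) for all k. In particular the squared Frobenius norm
  \<Sum>k s_k\<^sup>2 = \<Sum>i,j |F_ij|\<^sup>2 is constant, and finitely many holomorphic functions whose squared
  moduli have constant sum are constant (maximum modulus principle). So F is constant.
*)
theory Submission
  imports Defs "HOL-Complex_Analysis.Conformal_Mappings" "Jordan_Normal_Form.Schur_Decomposition"
begin

definition mat_trace :: "'a::comm_ring_1 mat \<Rightarrow> 'a" where
  "mat_trace A = (\<Sum>i<dim_row A. A $$ (i,i))"

definition frobenius_norm_sq :: "complex mat \<Rightarrow> real" where
  "frobenius_norm_sq A = (\<Sum>i<dim_row A. \<Sum>j<dim_col A. (cmod (A $$ (i,j)))\<^sup>2)"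

lemma mat_trace_mult_comm:
  assumes "A \<in> carrier_mat n m" "B \<in> carrier_mat m n"
  shows "mat_trace (A * B) = mat_trace (B * A)"
proof -
  have "mat_trace (A * B) = (\<Sum>i<n. \<Sum>k<m. A $$ (i,k) * B $$ (k,i))"
    using assms by (simp add: mat_trace_def scalar_prod_def atLeast0LessThan)
  also have "\<dots> = (\<Sum>k<m. \<Sum>i<n. B $$ (k,i) * A $$ (i,k))"
    by (subst sum.swap) (simp add: mult.commute)
  also have "\<dots> = mat_trace (B * A)"
    using assms by (simp add: mat_trace_def scalar_prod_def atLeast0LessThan)
  finally show ?thesis .
qed

lemma mat_trace_similar:
  assumes "similar_mat A B"
  shows "mat_trace A = mat_trace B"
proof -
  obtain n P Q where carr: "{A, B, P, Q} \<subseteq> carrier_mat n n"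
    and QP: "Q * P = 1\<^sub>m n" and AB: "A = P * B * Q"
    using similar_matD[OF assms] by blast
  then have "mat_trace A = mat_trace (P * (B * Q))"
    by (simp add: assoc_mult_mat[of P n n B n Q n])
  also have "\<dots> = mat_trace (B * Q * P)"
    using carr by (intro mat_trace_mult_comm[of _ n n]) auto
  also have "\<dots> = mat_trace B"
    using carr QP by (simp add: assoc_mult_mat[of B n n Q n P n] right_mult_one_mat[of B n n])
  finally show ?thesis .
qed

lemma proots_prod_list_linear_factors: "proots (\<Prod>a\<leftarrow>es. [:- a, 1:]) = mset es"
proof (induction es)
  case (Cons a es)
  have "(\<Prod>a\<leftarrow>es. [:- a, 1:]) \<noteq> 0"
    by (auto simp: prod_list_zero_iff)
  then have "proots ([:- a, 1:] * (\<Prod>a\<leftarrow>es. [:- a, 1:])) = {#a#} + mset es"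
    using Cons.IH by (subst proots_mult) auto
  then show ?case
    by simp
qed simp

lemma char_poly_eigenvalues:
  fixes A :: "complex mat"
  assumes A: "A \<in> carrier_mat n n"
  obtains es where "length es = n" "proots (char_poly A) = mset es"
    "det A = prod_list es" "mat_trace A = sum_list es"
proof -
  obtain es where cp: "char_poly A = (\<Prod>a\<leftarrow>es. [:- a, 1:])" and len: "length es = n"
    using char_poly_factorized[OF A] by blast
  obtain B P Q where "schur_decomposition A es = (B, P, Q)"
    by (cases "schur_decomposition A es") auto
  from schur_decomposition[OF A cp this] have wit: "similar_mat_wit A B P Q"
    and ut: "upper_triangular B" and diag: "diag_mat B = es" by auto
  have sim: "similar_mat A B" using wit unfolding similar_mat_def by blast
  have B: "B \<in> carrier_mat n n" using similar_mat_witD2[OF A wit] by auto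
  have "det A = prod_list es"
    using det_similar[OF sim] det_upper_triangular[OF ut B] diag by simp
  moreover have "mat_trace A = sum_list es"
    using mat_trace_similar[OF sim] carrier_matD(1)[OF B] unfolding diag[symmetric]
    by (simp add: mat_trace_def diag_mat_def interv_sum_list_conv_sum_set_nat atLeast0LessThan)
  moreover have "proots (char_poly A) = mset es"
    unfolding cp by (rule proots_prod_list_linear_factors)
  ultimately show ?thesis
    using that[OF len] by simp
qed

lemma dim_conj_transpose [simp]:
  "dim_row (conj_transpose A) = dim_col A" "dim_col (conj_transpose A) = dim_row A"
  by (simp_all add: conj_transpose_def)

lemma conj_transpose_carrier [simp]:
  assumes "A \<in> carrier_mat m n"
  shows "conj_transpose A \<in> carrier_mat n m"
  using carrier_matD[OF assms] by (intro carrier_matI) simp_all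

lemma index_conj_transpose [simp]:
  "i < dim_col A \<Longrightarrow> j < dim_row A \<Longrightarrow> conj_transpose A $$ (i,j) = cnj (A $$ (j,i))"
  by (simp add: conj_transpose_def)

lemma det_map_cnj: "det (map_mat cnj A) = cnj (det A)"
  unfolding det_def by (simp add: cnj_sum cnj_prod)

lemma det_conj_transpose:
  assumes "A \<in> carrier_mat n n"
  shows "det (conj_transpose A) = cnj (det A)"
proof -
  have "conj_transpose A = transpose_mat (map_mat cnj A)"
    using carrier_matD[OF assms] by (intro eq_matI) auto
  then show ?thesis
    using assms det_transpose[of "map_mat cnj A" n] det_map_cnj by simp
qed

lemma mat_trace_conj_transpose_mult:
  assumes "A \<in> carrier_mat m n"
  shows "mat_trace (conj_transpose A * A) = of_real (frobenius_norm_sq A)"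
proof -
  have "mat_trace (conj_transpose A * A) = (\<Sum>j<n. \<Sum>i<m. cnj (A $$ (i,j)) * A $$ (i,j))"
    using carrier_matD[OF assms] by (simp add: mat_trace_def scalar_prod_def atLeast0LessThan)
  also have "\<dots> = (\<Sum>j<n. \<Sum>i<m. of_real ((cmod (A $$ (i,j)))\<^sup>2))"
    by (simp add: complex_norm_square mult.commute del: of_real_power)
  also have "\<dots> = of_real (frobenius_norm_sq A)"
    using assms by (subst sum.swap) (simp add: frobenius_norm_sq_def)
  finally show ?thesis .
qed

lemma cscalar_prod_conj_transpose_mult:
  fixes A :: "complex mat"
  assumes "A \<in> carrier_mat m n" "v \<in> carrier_vec m" "w \<in> carrier_vec n"
  shows "(conj_transpose A *\<^sub>v v) \<bullet>c w = v \<bullet>c (A *\<^sub>v w)"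
  using assms
  by (simp add: scalar_prod_def sum_distrib_left sum_distrib_right cnj_sum ac_simps)
    (subst sum.swap, simp add: ac_simps)

lemma eigenvalue_conj_transpose_mult_nonneg:
  fixes A :: "complex mat"
  assumes A: "A \<in> carrier_mat m n" and e: "eigenvalue (conj_transpose A * A) e"
  shows "e \<ge> 0"
proof -
  obtain v where v: "v \<in> carrier_vec n" "v \<noteq> 0\<^sub>v n"
    and ev: "(conj_transpose A * A) *\<^sub>v v = e \<cdot>\<^sub>v v"
    using e A unfolding eigenvalue_def eigenvector_def by auto
  have "e * (v \<bullet>c v) = (conj_transpose A *\<^sub>v (A *\<^sub>v v)) \<bullet>c v"
    using A v by (simp add: ev assoc_mult_mat_vec[symmetric, of _ n m _ n])
  also have "\<dots> = (A *\<^sub>v v) \<bullet>c (A *\<^sub>v v)"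
    using A v by (intro cscalar_prod_conj_transpose_mult) auto
  txt \<open>On \<open>complex\<close>, \<open>\<le>\<close> is the partial order of \<open>Complex_Order\<close>: \<open>0 \<le> e\<close> says that
    \<open>e\<close> is a nonnegative real.\<close>
  finally have "e * (v \<bullet>c v) \<ge> 0"
    using conjugate_square_ge_0_vec by metis
  moreover have "v \<bullet>c v > 0"
    using v by simp
  ultimately show ?thesis
    by (auto simp: less_eq_complex_def less_complex_def zero_le_mult_iff)
qed

lemma conj_transpose_mult_eigenvalues:
  fixes A :: "complex mat"
  assumes A: "A \<in> carrier_mat n n"
  obtains rs :: "real list" where
    "proots (char_poly (conj_transpose A * A)) = mset (map of_real rs)"
    "length rs = n" "\<forall>r\<in>set rs. 0 \<le> r"
    "prod_list rs = (cmod (det A))\<^sup>2" "sum_list rs = frobenius_norm_sq A"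
proof -
  let ?G = "conj_transpose A * A"
  have G: "?G \<in> carrier_mat n n"
    by (rule mult_carrier_mat[OF conj_transpose_carrier[OF A] A])
  obtain es where len: "length es = n" and roots: "proots (char_poly ?G) = mset es"
    and det: "det ?G = prod_list es" and tr: "mat_trace ?G = sum_list es"
    using char_poly_eigenvalues[OF G] .
  have nonneg: "e \<ge> 0" if "e \<in> set es" for e
  proof -
    have "e \<in># proots (char_poly ?G)"
      using that roots by simp
    then have "poly (char_poly ?G) e = 0"
      by (cases "char_poly ?G = 0") auto
    then show ?thesis
      using eigenvalue_conj_transpose_mult_nonneg[OF A] eigenvalue_root_char_poly[OF G] by blast
  qed
  define rs where "rs = map Re es"
  have "map (of_real \<circ> Re) es = es"
    using nonneg by (intro map_idI) (auto simp: less_eq_complex_def complex_eq_iff)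
  then have es: "es = map of_real rs"
    unfolding rs_def by simp
  have "of_real (prod_list rs) = cnj (det A) * det A"
    using det det_conj_transpose[OF A] det_mult[OF conj_transpose_carrier[OF A] A]
    by (simp add: es)
  then have prod: "prod_list rs = (cmod (det A))\<^sup>2"
    by (metis complex_norm_square mult.commute of_real_eq_iff)
  have "of_real (sum_list rs) = (of_real (frobenius_norm_sq A) :: complex)"
    using tr mat_trace_conj_transpose_mult[OF A] by (simp add: es)
  then have sum: "sum_list rs = frobenius_norm_sq A"
    by (simp only: of_real_eq_iff)
  have rs_nonneg: "\<forall>r\<in>set rs. 0 \<le> r"
    using nonneg by (auto simp: rs_def less_eq_complex_def)
  show ?thesis
    by (rule that[OF _ _ rs_nonneg prod sum]) (use roots len in \<open>simp_all add: es\<close>)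
qed

lemma mset_singular_values:
  assumes "proots (char_poly (conj_transpose A * A)) = mset (map of_real rs)"
  shows "mset (singular_values A) = mset (map sqrt rs)"
  using assms by (simp add: singular_values_def multiset.map_comp o_def)

lemma length_singular_values:
  assumes "A \<in> carrier_mat n n"
  shows "length (singular_values A) = n"
  by (rule conj_transpose_mult_eigenvalues[OF assms])
    (metis mset_singular_values size_mset length_map)

lemma singular_values_nonneg:
  assumes "A \<in> carrier_mat n n" "s \<in> set (singular_values A)"
  shows "0 \<le> s"
proof (rule conj_transpose_mult_eigenvalues[OF assms(1)])
  fix rs assume roots: "proots (char_poly (conj_transpose A * A)) = mset (map of_real rs)"
    and nonneg: "\<forall>r\<in>set rs. 0 \<le> r"
  have "s \<in> sqrt ` set rs"
    using assms(2) mset_singular_values[OF roots] by (metis set_mset_mset set_map)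
  then show "0 \<le> s"
    using nonneg by auto
qed

lemma prod_list_singular_values:
  assumes "A \<in> carrier_mat n n"
  shows "prod_list (singular_values A) = cmod (det A)"
proof (rule conj_transpose_mult_eigenvalues[OF assms])
  fix rs assume roots: "proots (char_poly (conj_transpose A * A)) = mset (map of_real rs)"
    and nonneg: "\<forall>r\<in>set rs. 0 \<le> r" and prod: "prod_list rs = (cmod (det A))\<^sup>2"
  have "prod_list (singular_values A) = prod_list (map sqrt rs)"
    using mset_singular_values[OF roots] by (metis prod_mset_prod_list)
  also have "\<dots> = sqrt (prod_list rs)"
    by (induction rs) (simp_all add: real_sqrt_mult)
  finally show ?thesis
    using prod by simp
qed

lemma sum_list_singular_values_sq:
  assumes "A \<in> carrier_mat n n"
  shows "(\<Sum>s\<leftarrow>singular_values A. s\<^sup>2) = frobenius_norm_sq A"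
proof (rule conj_transpose_mult_eigenvalues[OF assms])
  fix rs assume roots: "proots (char_poly (conj_transpose A * A)) = mset (map of_real rs)"
    and nonneg: "\<forall>r\<in>set rs. 0 \<le> r" and sum: "sum_list rs = frobenius_norm_sq A"
  have "mset (map (\<lambda>s. s\<^sup>2) (singular_values A)) = mset (map (\<lambda>r. (sqrt r)\<^sup>2) rs)"
    by (simp add: mset_singular_values[OF roots] multiset.map_comp o_def)
  then have "(\<Sum>s\<leftarrow>singular_values A. s\<^sup>2) = (\<Sum>r\<leftarrow>rs. (sqrt r)\<^sup>2)"
    by (metis sum_mset_sum_list)
  also have "\<dots> = sum_list rs"
    using nonneg by (simp add: map_idI)
  finally show ?thesis
    using sum by simp
qed

lemma prod_list_mono:
  fixes xs ys :: "'a::linordered_semidom list"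
  assumes "list_all2 (\<le>) xs ys" "\<forall>x\<in>set xs. 0 \<le> x"
  shows "prod_list xs \<le> prod_list ys"
  using assms
  by (induction rule: list_all2_induct) (auto intro!: mult_mono prod_list_nonneg)

lemma prod_list_eq_imp_eq:
  fixes xs ys :: "'a::linordered_idom list"
  assumes "list_all2 (\<le>) xs ys" "\<forall>x\<in>set xs. 0 \<le> x"
    and "prod_list xs = prod_list ys" "prod_list xs \<noteq> 0"
  shows "xs = ys"
  using assms
proof (induction rule: list_all2_induct)
  case (Cons x xs y ys)
  have "0 \<le> prod_list xs"
    using Cons.prems(1) by (intro prod_list_nonneg) auto
  then have pos: "0 < x" "0 < prod_list xs"
    using Cons.prems(1,3) by (auto simp: less_le)
  have le: "prod_list xs \<le> prod_list ys"
    using prod_list_mono Cons.hyps(2) Cons.prems(1) by auto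
  have "x = y"
  proof (rule ccontr)
    assume "x \<noteq> y"
    then have "x * prod_list xs < y * prod_list ys"
      using Cons.hyps(1) pos le by (intro mult_less_le_imp_less) auto
    then show False
      using Cons.prems(2) by simp
  qed
  then show ?case
    using Cons pos by auto
qed simp

lemma singular_values_dominated_iff:
  assumes "A \<in> carrier_mat n n" "B \<in> carrier_mat n n"
  shows "list_all2 (\<le>) (singular_values A) (singular_values B) \<longleftrightarrow>
    (\<forall>k\<in>{1..n}. sing_val k A \<le> sing_val k B)"
proof -
  have shift: "(\<forall>k\<in>{1..n}. P (k - 1)) \<longleftrightarrow> (\<forall>i<n. P i)" for P
  proof
    show "\<forall>i<n. P i" if "\<forall>k\<in>{1..n}. P (k - 1)"
    proof (intro allI impI)
      fix i assume "i < n"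
      then show "P i"
        using that[rule_format, of "Suc i"] by simp
    qed
    show "\<forall>k\<in>{1..n}. P (k - 1)" if "\<forall>i<n. P i"
      using that by auto
  qed
  show ?thesis
    using length_singular_values[OF assms(1)] length_singular_values[OF assms(2)]
      shift[of "\<lambda>i. singular_values A ! i \<le> singular_values B ! i"]
    by (simp add: list_all2_conv_all_nth sing_val_def)
qed

lemma cmod_det_mono_singular_values:
  assumes "A \<in> carrier_mat n n" "B \<in> carrier_mat n n"
    and "list_all2 (\<le>) (singular_values A) (singular_values B)"
  shows "cmod (det A) \<le> cmod (det B)"
  using prod_list_mono[OF assms(3)] singular_values_nonneg[OF assms(1)]
  by (simp add: prod_list_singular_values[OF assms(1)] prod_list_singular_values[OF assms(2)])

lemma singular_values_eq_if_dominated: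
  assumes "A \<in> carrier_mat n n" "B \<in> carrier_mat n n"
    and "list_all2 (\<le>) (singular_values A) (singular_values B)"
    and "cmod (det A) = cmod (det B)" "det A \<noteq> 0"
  shows "singular_values A = singular_values B"
proof (rule prod_list_eq_imp_eq[OF assms(3)])
  show "\<forall>s\<in>set (singular_values A). 0 \<le> s"
    using singular_values_nonneg[OF assms(1)] by blast
  show "prod_list (singular_values A) = prod_list (singular_values B)"
    using assms(4) prod_list_singular_values assms(1,2) by metis
  show "prod_list (singular_values A) \<noteq> 0"
    using assms(5) by (simp add: prod_list_singular_values[OF assms(1)])
qed

lemma holomorphic_on_det:
  assumes "\<forall>z\<in>S. F z \<in> carrier_mat n n"
    and "\<forall>i<n. \<forall>j<n. (\<lambda>z. F z $$ (i,j)) holomorphic_on S"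
  shows "(\<lambda>z. det (F z)) holomorphic_on S"
proof -
  have "(\<lambda>z. \<Sum>p | p permutes {0..<n}. of_int (sign p) * (\<Prod>i = 0..<n. F z $$ (i, p i)))
      holomorphic_on S"
    using assms(2) by (intro holomorphic_intros) (auto dest: permutes_in_image)
  then show ?thesis
    by (rule holomorphic_transform) (use assms(1) det_def'[of "F _" n] in auto)
qed

lemma minimum_modulus_principle:
  assumes "f holomorphic_on S" "open S" "connected S" "\<xi> \<in> S" "f \<xi> \<noteq> 0"
    and "\<And>z. z \<in> S \<Longrightarrow> norm (f \<xi>) \<le> norm (f z)"
  shows "f constant_on S"
proof -
  have nz: "f z \<noteq> 0" if "z \<in> S" for z
    using assms(5) assms(6)[OF that] by auto
  have "(\<lambda>z. inverse (f z)) constant_on S"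
    using assms nz
    by (intro maximum_modulus_principle[of _ S S \<xi>] holomorphic_on_inverse)
      (auto simp: norm_inverse le_imp_inverse_le)
  then show ?thesis
    by (auto simp: constant_on_def) (metis inverse_inverse_eq)
qed

lemma norm_diff_sq: "(cmod (a - b))\<^sup>2 = (cmod a)\<^sup>2 + (cmod b)\<^sup>2 - 2 * Re (a * cnj b)"
  unfolding cmod_power2 by (simp add: power2_eq_square algebra_simps)

text \<open>With \<open>w\<close> fixed, \<open>g z = \<Sum>i. f\<^sub>i z * cnj (f\<^sub>i w)\<close> is holomorphic and
  \<open>|g z| \<le> \<Sum>i. (|f\<^sub>i z|\<^sup>2 + |f\<^sub>i w|\<^sup>2) / 2 = g w\<close>, so \<open>g\<close> is constant by the maximum modulus
  principle; then \<open>\<Sum>i. |f\<^sub>i z - f\<^sub>i w|\<^sup>2 = C + C - 2 Re (g z) = 0\<close>.\<close>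
lemma holomorphic_constant_if_sum_norm_sq_constant:
  fixes f :: "'i \<Rightarrow> complex \<Rightarrow> complex"
  assumes I: "finite I" "i \<in> I" and hol: "\<forall>i\<in>I. f i holomorphic_on S"
    and S: "open S" "connected S"
    and C: "\<forall>z\<in>S. (\<Sum>i\<in>I. (cmod (f i z))\<^sup>2) = C"
  shows "f i constant_on S"
proof -
  have "f i z = f i w" if z: "z \<in> S" and w: "w \<in> S" for z w
  proof -
    define g where "g z = (\<Sum>i\<in>I. f i z * cnj (f i w))" for z
    have "g w = (\<Sum>i\<in>I. of_real ((cmod (f i w))\<^sup>2))"
      by (simp add: g_def complex_norm_square del: of_real_power)
    then have gw: "g w = of_real C"
      using C w by (simp del: of_real_power flip: of_real_sum)
    have C_nonneg: "0 \<le> C"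
      using C w by (metis sum_nonneg zero_le_power2)
    have bound: "cmod (g u) \<le> cmod (g w)" if u: "u \<in> S" for u
    proof -
      have "cmod (g u) \<le> (\<Sum>i\<in>I. cmod (f i u) * cmod (f i w))"
        unfolding g_def by (rule order_trans[OF norm_sum]) (simp add: norm_mult)
      also have "\<dots> \<le> (\<Sum>i\<in>I. ((cmod (f i u))\<^sup>2 + (cmod (f i w))\<^sup>2) / 2)"
      proof (rule sum_mono)
        fix i
        show "cmod (f i u) * cmod (f i w) \<le> ((cmod (f i u))\<^sup>2 + (cmod (f i w))\<^sup>2) / 2"
          using sum_squares_bound[of "cmod (f i u)" "cmod (f i w)"] by simp
      qed
      also have "\<dots> = ((\<Sum>i\<in>I. (cmod (f i u))\<^sup>2) + (\<Sum>i\<in>I. (cmod (f i w))\<^sup>2)) / 2"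
        by (simp add: sum.distrib flip: sum_divide_distrib)
      also have "\<dots> = cmod (g w)"
        using C u w gw C_nonneg by simp
      finally show ?thesis .
    qed
    have "g holomorphic_on S"
      using hol unfolding g_def by (intro holomorphic_intros) auto
    then have "g constant_on S"
      using S w bound by (intro maximum_modulus_principle[of _ S S w]) auto
    then have "g z = of_real C"
      using gw z w unfolding constant_on_def by metis
    have "(\<Sum>i\<in>I. (cmod (f i z - f i w))\<^sup>2)
        = (\<Sum>i\<in>I. (cmod (f i z))\<^sup>2) + (\<Sum>i\<in>I. (cmod (f i w))\<^sup>2) - 2 * Re (g z)"
      by (simp add: norm_diff_sq g_def sum.distrib sum_subtractf sum_distrib_left Re_sum)
    also have "\<dots> = 0"
      using C z w \<open>g z = of_real C\<close> by simp
    finally have "(\<Sum>i\<in>I. (cmod (f i z - f i w))\<^sup>2) = 0" .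
    then show ?thesis
      using I by (simp add: sum_nonneg_eq_0_iff)
  qed
  then show ?thesis
    unfolding constant_on_def by blast
qed

lemma holomorphic_mat_constant_if_frobenius_constant:
  assumes S: "open S" "connected S" and carrier: "\<forall>z\<in>S. F z \<in> carrier_mat n n"
    and hol: "\<forall>i<n. \<forall>j<n. (\<lambda>z. F z $$ (i,j)) holomorphic_on S"
    and frob: "\<forall>z\<in>S. frobenius_norm_sq (F z) = C"
    and z: "z \<in> S" and w: "w \<in> S"
  shows "F z = F w"
proof -
  let ?I = "{..<n} \<times> {..<n}"
  have sum: "\<forall>u\<in>S. (\<Sum>p\<in>?I. (cmod (F u $$ p))\<^sup>2) = C"
  proof
    fix u assume u: "u \<in> S"
    show "(\<Sum>p\<in>?I. (cmod (F u $$ p))\<^sup>2) = C"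
      using frob[rule_format, OF u] carrier_matD[OF carrier[rule_format, OF u]]
      by (simp add: frobenius_norm_sq_def sum.cartesian_product)
  qed
  have entries_hol: "\<forall>p\<in>?I. (\<lambda>u. F u $$ p) holomorphic_on S"
    using hol by blast
  have entries: "F z $$ (i,j) = F w $$ (i,j)" if "i < n" "j < n" for i j
  proof -
    have "(\<lambda>u. F u $$ (i,j)) constant_on S"
      using holomorphic_constant_if_sum_norm_sq_constant[OF _ _ entries_hol S sum] that by simp
    then show ?thesis
      using z w unfolding constant_on_def by metis
  qed
  have Fz: "F z \<in> carrier_mat n n" and Fw: "F w \<in> carrier_mat n n"
    using carrier z w by blast+
  show ?thesis
    by (rule eq_matI) (use entries carrier_matD[OF Fz] carrier_matD[OF Fw] in auto)
qed

theorem corollary10: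
  fixes \<Omega> :: "complex set" and F :: "complex \<Rightarrow> complex mat" and n :: nat and z0 :: complex
  assumes "open \<Omega>" and "connected \<Omega>" and "\<Omega> \<noteq> {}"
    and "\<forall>z\<in>\<Omega>. F z \<in> carrier_mat n n"
    and "\<forall>i<n. \<forall>j<n. (\<lambda>z. F z $$ (i,j)) analytic_on \<Omega>"
    and "\<not> (\<exists>C. \<forall>z\<in>\<Omega>. F z = C)"
    and "z0 \<in> \<Omega>"
    and "\<forall>k\<in>{1..n}. \<forall>z\<in>\<Omega>. sing_val k (F z0) \<le> sing_val k (F z)"
  shows "Determinant.det (F z0) = 0"
proof (rule ccontr)
  assume det_nz: "det (F z0) \<noteq> 0"
  note carrier = assms(4) and z0 = assms(7)
  have hol: "\<forall>i<n. \<forall>j<n. (\<lambda>z. F z $$ (i,j)) holomorphic_on \<Omega>"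
    using assms(5) analytic_on_open[OF assms(1)] by blast
  have dominated: "list_all2 (\<le>) (singular_values (F z0)) (singular_values (F z))"
    if "z \<in> \<Omega>" for z
    using singular_values_dominated_iff carrier assms(8) z0 that by blast
  have "cmod (det (F z0)) \<le> cmod (det (F z))" if "z \<in> \<Omega>" for z
    using cmod_det_mono_singular_values carrier z0 that dominated by blast
  then have "(\<lambda>z. det (F z)) constant_on \<Omega>"
    using holomorphic_on_det[OF carrier hol] assms(1,2) z0 det_nz
    by (intro minimum_modulus_principle) auto
  then have "singular_values (F z0) = singular_values (F z)" if "z \<in> \<Omega>" for z
    using singular_values_eq_if_dominated dominated carrier z0 that det_nz
    unfolding constant_on_def by metis
  then have "frobenius_norm_sq (F z) = frobenius_norm_sq (F z0)" if "z \<in> \<Omega>" for z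
    using sum_list_singular_values_sq carrier that z0 by metis
  then have "F z = F z0" if "z \<in> \<Omega>" for z
    using holomorphic_mat_constant_if_frobenius_constant[OF assms(1,2) carrier hol] that z0 by blast
  then show False
    using assms(6) by blast
qed

end
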